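(* Let $K_1\subset U(N_1)$ and $K_2\subset U(N_2)$ be compact connected subgroups and let $K=K_1\otimes K_2=\{U_1\otimes U_2\mid U_1\in K_1,U_2\in K_2\}\subset U(N_1N_2)$, where $\otimes$ is the Kronecker product. Let $A=A_1\otimes A_2$ and $C=C_1\otimes C_2$ with $A_i,C_i\in\mathbb{C}^{N_i\times N_i}$, $i=1,2$. Then $$W_K(C,A)=W_{K_1}(C_1,A_1)\cdot W_{K_2}(C_2,A_2)=\{z_1z_2\mid z_1\in W_{K_1}(C_1,A_1),\ z_2\in W_{K_2}(C_2,A_2)\}.$$ In particular, $W_K(C,A)$ is star-shaped (resp. convex) if either $W_{K_1}(C_1,A_1)$ is star-shaped (resp. convex) and $W_{K_2}(C_2,A_2)$ is contained in a ray $\{re^{i\varphi}\mid r\ge 0\}$ of the complex plane (for some fixed $\varphi\in\mathbb{R}$), or vice versa (with the roles of the indices $1$ and $2$ interchanged).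
   Context: For a compact connected subgroup $K\subset U(N)$ and $C,A\in\mathbb{C}^{N\times N}$, the relative $C$-numerical range is $W_K(C,A)=\{\mathrm{tr}(C^\dagger UAU^\dagger)\mid U\in K\}\subset\mathbb{C}$. *)

theory Defs
  imports "HOL-Analysis.Analysis"
begin

definition dagger :: "complex^'n^'n \<Rightarrow> complex^'n^'n" where
  "dagger A = (\<chi> i j. cnj (A $ j $ i))"

definition unitary_mat :: "complex^'n^'n \<Rightarrow> bool" where
  "unitary_mat U \<longleftrightarrow> U ** dagger U = mat 1"

definition compact_connected_unitary_subgroup :: "(complex^'n^'n) set \<Rightarrow> bool" where
  "compact_connected_unitary_subgroup K \<longleftrightarrow>
     K \<subseteq> {U. unitary_mat U} \<and> mat 1 \<in> K \<and>
     (\<forall>U\<in>K. \<forall>V\<in>K. U ** V \<in> K) \<and> (\<forall>U\<in>K. dagger U \<in> K) \<and>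
     compact K \<and> connected K"

definition rel_C_numrange ::
  "(complex^'n^'n) set \<Rightarrow> complex^'n^'n \<Rightarrow> complex^'n^'n \<Rightarrow> complex set" where
  "rel_C_numrange K C A = {trace (dagger C ** U ** A ** dagger U) | U. U \<in> K}"

definition kron :: "complex^'n^'n \<Rightarrow> complex^'m^'m \<Rightarrow> complex^('n \<times> 'm)^('n \<times> 'm)" where
  "kron A B = (\<chi> p q. A $ fst p $ fst q * B $ snd p $ snd q)"

definition in_ray :: "complex set \<Rightarrow> bool" where
  "in_ray S \<longleftrightarrow> (\<exists>\<phi>::real. S \<subseteq> {complex_of_real r * exp (\<i> * complex_of_real \<phi>) | r. r \<ge> 0})"

end

theory Submission
  imports Defs
begin

text \<open>
  The Kronecker product is multiplicative and commutes with the dagger, and the trace of a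
  Kronecker product is the product of the traces. Hence the trace defining a point of
  \<open>W\<^sub>K(C\<^sub>1 \<otimes> C\<^sub>2, A\<^sub>1 \<otimes> A\<^sub>2)\<close> at \<open>U\<^sub>1 \<otimes> U\<^sub>2\<close> factors into the traces defining points of
  \<open>W\<^sub>K\<^sub>1(C\<^sub>1, A\<^sub>1)\<close> and \<open>W\<^sub>K\<^sub>2(C\<^sub>2, A\<^sub>2)\<close>.

  Each \<open>W\<^sub>K\<^sub>i\<close> is a continuous image of a connected group, so it is connected and nonempty;
  if it lies in the ray through a unit vector \<open>c\<close>, it equals \<open>c R\<close> for the real interval
  \<open>R\<close> of norms of its points, \<open>R \<subseteq> [0,\<infinity>)\<close>. The product with a set \<open>S\<close> is then
  \<open>c (R S)\<close>, and \<open>R S\<close> inherits convexity or star-shapedness from \<open>S\<close>: a convex combination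
  \<open>(1 - t) r\<^sub>1 z\<^sub>1 + t r\<^sub>2 z\<^sub>2\<close> equals \<open>s ((1 - u) z\<^sub>1 + u z\<^sub>2)\<close> with
  \<open>s = (1 - t) r\<^sub>1 + t r\<^sub>2 \<in> R\<close> and \<open>u = t r\<^sub>2 / s\<close>.
\<close>

lemma sum_UNIV_prod_mult:
  fixes f :: "'a::finite \<Rightarrow> 'c::semiring_0" and g :: "'b::finite \<Rightarrow> 'c"
  shows "(\<Sum>k\<in>UNIV. f (fst k) * g (snd k)) = sum f UNIV * sum g UNIV"
  by (simp add: sum_product sum.cartesian_product' flip: UNIV_Times_UNIV)

lemma dagger_kron: "dagger (kron A B) = kron (dagger A) (dagger B)"
  by (simp add: dagger_def kron_def vec_eq_iff)

lemma kron_mult: "kron A B ** kron C D = kron (A ** C) (B ** D)"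
proof -
  have "(\<Sum>k\<in>UNIV. A $ fst p $ fst k * B $ snd p $ snd k * (C $ fst k $ fst q * D $ snd k $ snd q))
      = (\<Sum>k\<in>UNIV. A $ fst p $ k * C $ k $ fst q) * (\<Sum>k\<in>UNIV. B $ snd p $ k * D $ k $ snd q)"
    for p q
    by (subst sum_UNIV_prod_mult[symmetric]) (simp add: algebra_simps)
  then show ?thesis
    by (simp add: kron_def matrix_matrix_mult_def vec_eq_iff)
qed

lemma trace_kron: "trace (kron A B) = trace A * trace B"
  using sum_UNIV_prod_mult[of "\<lambda>i. A $ i $ i" "\<lambda>j. B $ j $ j"]
  by (simp add: trace_def kron_def)

lemma rel_C_numrange_kron:
  "rel_C_numrange {kron U1 U2 | U1 U2. U1 \<in> K1 \<and> U2 \<in> K2} (kron C1 C2) (kron A1 A2) =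
     {z1 * z2 | z1 z2. z1 \<in> rel_C_numrange K1 C1 A1 \<and> z2 \<in> rel_C_numrange K2 C2 A2}"
proof -
  let ?K = "{kron U1 U2 | U1 U2. U1 \<in> K1 \<and> U2 \<in> K2}"
  let ?W = "{z1 * z2 | z1 z2. z1 \<in> rel_C_numrange K1 C1 A1 \<and> z2 \<in> rel_C_numrange K2 C2 A2}"
  have trace_eq:
    "trace (dagger (kron C1 C2) ** kron U1 U2 ** kron A1 A2 ** dagger (kron U1 U2))
      = trace (dagger C1 ** U1 ** A1 ** dagger U1) * trace (dagger C2 ** U2 ** A2 ** dagger U2)"
    for U1 U2
    by (simp add: dagger_kron kron_mult trace_kron)
  show ?thesis
  proof (intro equalityI subsetI)
    fix x assume "x \<in> rel_C_numrange ?K (kron C1 C2) (kron A1 A2)"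
    then show "x \<in> ?W"
      unfolding rel_C_numrange_def using trace_eq by blast
  next
    fix x assume "x \<in> ?W"
    then obtain U1 U2 where "U1 \<in> K1" "U2 \<in> K2"
      "x = trace (dagger C1 ** U1 ** A1 ** dagger U1) * trace (dagger C2 ** U2 ** A2 ** dagger U2)"
      unfolding rel_C_numrange_def by blast
    then show "x \<in> rel_C_numrange ?K (kron C1 C2) (kron A1 A2)"
      unfolding rel_C_numrange_def by (auto simp flip: trace_eq)
  qed
qed

lemma continuous_on_matrix_mult:
  fixes f g :: "'a::topological_space \<Rightarrow> complex^'n::finite^'n"
  shows "continuous_on S f \<Longrightarrow> continuous_on S g \<Longrightarrow> continuous_on S (\<lambda>x. f x ** g x)"
  unfolding matrix_matrix_mult_def
  by (intro continuous_on_vec_lambda continuous_on_sum continuous_on_mult continuous_on_component)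
    auto

lemma continuous_on_dagger:
  fixes f :: "'a::topological_space \<Rightarrow> complex^'n::finite^'n"
  shows "continuous_on S f \<Longrightarrow> continuous_on S (\<lambda>x. dagger (f x))"
  unfolding dagger_def
  by (intro continuous_on_vec_lambda continuous_on_cnj continuous_on_component) auto

lemma continuous_on_trace:
  fixes f :: "'a::topological_space \<Rightarrow> complex^'n::finite^'n"
  shows "continuous_on S f \<Longrightarrow> continuous_on S (\<lambda>x. trace (f x))"
  unfolding trace_def by (intro continuous_on_sum continuous_on_component) auto

lemma rel_C_numrange_eq_image:
  "rel_C_numrange K C A = (\<lambda>U. trace (dagger C ** U ** A ** dagger U)) ` K"
  unfolding rel_C_numrange_def by blast

lemma connected_rel_C_numrange:
  fixes K :: "(complex^'n::finite^'n) set"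
  assumes "connected K"
  shows "connected (rel_C_numrange K C A)"
  unfolding rel_C_numrange_eq_image
  by (intro connected_continuous_image[OF _ assms] continuous_on_trace continuous_on_matrix_mult
      continuous_on_dagger continuous_on_const continuous_on_id)

lemma rel_C_numrange_nonempty: "K \<noteq> {} \<Longrightarrow> rel_C_numrange K C A \<noteq> {}"
  unfolding rel_C_numrange_eq_image by blast

lemma segment_combination_in_nonneg_scalings:
  fixes S :: "'a::real_vector set"
  assumes R: "convex R" "R \<subseteq> {0..}" "r1 \<in> R" "r2 \<in> R"
    and seg: "closed_segment z1 z2 \<subseteq> S" and t: "0 \<le> t" "t \<le> 1"
  shows "(1 - t) *\<^sub>R (r1 *\<^sub>R z1) + t *\<^sub>R (r2 *\<^sub>R z2) \<in> {r *\<^sub>R z | r z. r \<in> R \<and> z \<in> S}"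
proof -
  define s where "s = (1 - t) * r1 + t * r2"
  have "s \<in> R"
    using R t unfolding s_def convex_alt by simp
  have nonneg: "0 \<le> (1 - t) * r1" "0 \<le> t * r2"
    using R t by auto
  show ?thesis
  proof (cases "s = 0")
    case True
    then have "(1 - t) * r1 = 0" "t * r2 = 0"
      using nonneg unfolding s_def by linarith+
    then have "(1 - t) *\<^sub>R (r1 *\<^sub>R z1) + t *\<^sub>R (r2 *\<^sub>R z2) = s *\<^sub>R z1"
      by (simp only: scaleR_scaleR True scaleR_zero_left add_0)
    moreover have "z1 \<in> S"
      using seg by auto
    ultimately show ?thesis
      using \<open>s \<in> R\<close> by blast
  next
    case False
    define u where "u = t * r2 / s"
    have "0 < s"
      using False nonneg unfolding s_def by linarith
    then have u: "0 \<le> u" "u \<le> 1" "s * u = t * r2" "s * (1 - u) = (1 - t) * r1"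
      using nonneg by (auto simp: u_def s_def divide_le_eq right_diff_distrib)
    then have "(1 - t) *\<^sub>R (r1 *\<^sub>R z1) + t *\<^sub>R (r2 *\<^sub>R z2) = s *\<^sub>R ((1 - u) *\<^sub>R z1 + u *\<^sub>R z2)"
      by (simp add: scaleR_add_right flip: u(3,4))
    moreover have "(1 - u) *\<^sub>R z1 + u *\<^sub>R z2 \<in> S"
      using seg u(1,2) unfolding closed_segment_def by blast
    ultimately show ?thesis
      using \<open>s \<in> R\<close> by blast
  qed
qed

lemma convex_nonneg_scalings:
  fixes S :: "'a::real_vector set"
  assumes "convex S" "convex R" "R \<subseteq> {0..}"
  shows "convex {r *\<^sub>R z | r z. r \<in> R \<and> z \<in> S}"
  unfolding convex_alt
proof (intro ballI allI impI)
  fix x y and t :: real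
  assume "x \<in> {r *\<^sub>R z | r z. r \<in> R \<and> z \<in> S}" "y \<in> {r *\<^sub>R z | r z. r \<in> R \<and> z \<in> S}"
    and t: "0 \<le> t \<and> t \<le> 1"
  then obtain r1 z1 r2 z2
    where xy: "r1 \<in> R" "z1 \<in> S" "x = r1 *\<^sub>R z1" "r2 \<in> R" "z2 \<in> S" "y = r2 *\<^sub>R z2"
    by blast
  have seg: "closed_segment z1 z2 \<subseteq> S"
    using assms(1) xy(2,5) by (rule convex_contains_segment[THEN iffD1, rule_format])
  show "(1 - t) *\<^sub>R x + t *\<^sub>R y \<in> {r *\<^sub>R z | r z. r \<in> R \<and> z \<in> S}"
    unfolding xy(3,6) using t
    by (intro segment_combination_in_nonneg_scalings[OF assms(2,3) xy(1,4) seg]) auto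
qed

lemma starlike_nonneg_scalings:
  fixes S :: "'a::real_vector set"
  assumes "starlike S" "convex R" "R \<subseteq> {0..}" "R \<noteq> {}"
  shows "starlike {r *\<^sub>R z | r z. r \<in> R \<and> z \<in> S}" (is "starlike ?RS")
proof -
  obtain z0 where z0: "z0 \<in> S" "\<And>z. z \<in> S \<Longrightarrow> closed_segment z0 z \<subseteq> S"
    using assms(1) unfolding starlike_def by blast
  obtain r0 where "r0 \<in> R"
    using assms(4) by blast
  have "closed_segment (r0 *\<^sub>R z0) w \<subseteq> ?RS" if w: "w \<in> ?RS" for w
  proof
    fix y assume "y \<in> closed_segment (r0 *\<^sub>R z0) w"
    then obtain t where "0 \<le> t" "t \<le> 1" "y = (1 - t) *\<^sub>R (r0 *\<^sub>R z0) + t *\<^sub>R w"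
      unfolding closed_segment_def by blast
    moreover obtain r z where "r \<in> R" "z \<in> S" "w = r *\<^sub>R z"
      using w by blast
    ultimately show "y \<in> ?RS"
      using segment_combination_in_nonneg_scalings[OF assms(2,3) \<open>r0 \<in> R\<close> \<open>r \<in> R\<close>
          z0(2)[OF \<open>z \<in> S\<close>]]
      by simp
  qed
  moreover have "r0 *\<^sub>R z0 \<in> ?RS"
    using \<open>r0 \<in> R\<close> z0(1) by blast
  ultimately show ?thesis
    unfolding starlike_def by blast
qed

lemma starlike_linear_image:
  assumes "linear f" "starlike S"
  shows "starlike (f ` S)"
proof -
  obtain a where "a \<in> S" "\<And>x. x \<in> S \<Longrightarrow> closed_segment a x \<subseteq> S"
    using assms(2) unfolding starlike_def by blast
  then have "f a \<in> f ` S" "\<And>x. x \<in> S \<Longrightarrow> closed_segment (f a) (f x) \<subseteq> f ` S"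
    by (auto simp: closed_segment_linear_image[OF assms(1)])
  then show ?thesis
    unfolding starlike_def by blast
qed

lemma in_ray_eq_norm_scalings:
  assumes "in_ray T"
  obtains c :: complex where "T = {r *\<^sub>R c | r. r \<in> norm ` T}"
proof -
  obtain \<phi> where \<phi>: "T \<subseteq> {complex_of_real r * exp (\<i> * complex_of_real \<phi>) | r. r \<ge> 0}"
    using assms unfolding in_ray_def by blast
  define c where "c = exp (\<i> * complex_of_real \<phi>)"
  have "norm c = 1"
    unfolding c_def by (simp add: norm_exp_eq_Re)
  then have "z = norm z *\<^sub>R c" if "z \<in> T" for z
    using \<phi> that unfolding c_def scaleR_conv_of_real by (auto simp: norm_mult)
  then have "T = {r *\<^sub>R c | r. r \<in> norm ` T}"
    by force
  then show ?thesis
    using that by blast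
qed

lemma times_ray_eq_image_scalings:
  fixes c :: complex
  shows "{z1 * z2 | z1 z2. z1 \<in> S \<and> z2 \<in> {r *\<^sub>R c | r. r \<in> N}} =
    (\<lambda>w. c * w) ` {r *\<^sub>R z | r z. r \<in> N \<and> z \<in> S}"
proof -
  have comm: "z * (r *\<^sub>R c) = c * (r *\<^sub>R z)" for z r
    by (simp add: scaleR_conv_of_real)
  show ?thesis
  proof (intro equalityI subsetI)
    fix x assume "x \<in> {z1 * z2 | z1 z2. z1 \<in> S \<and> z2 \<in> {r *\<^sub>R c | r. r \<in> N}}"
    then obtain z r where "z \<in> S" "r \<in> N" "x = c * (r *\<^sub>R z)"
      by (auto simp: comm)
    then show "x \<in> (\<lambda>w. c * w) ` {r *\<^sub>R z | r z. r \<in> N \<and> z \<in> S}"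
      by blast
  next
    fix x assume "x \<in> (\<lambda>w. c * w) ` {r *\<^sub>R z | r z. r \<in> N \<and> z \<in> S}"
    then obtain z r where "z \<in> S" "r \<in> N" "x = z * (r *\<^sub>R c)"
      by (auto simp: comm)
    then show "x \<in> {z1 * z2 | z1 z2. z1 \<in> S \<and> z2 \<in> {r *\<^sub>R c | r. r \<in> N}}"
      by blast
  qed
qed

lemma times_in_ray_eq_image_nonneg_scalings:
  fixes S T :: "complex set"
  assumes "in_ray T"
  obtains c where
    "{z1 * z2 | z1 z2. z1 \<in> S \<and> z2 \<in> T} =
      (\<lambda>w. c * w) ` {r *\<^sub>R z | r z. r \<in> norm ` T \<and> z \<in> S}"
proof -
  obtain c where c: "T = {r *\<^sub>R c | r. r \<in> norm ` T}"
    using in_ray_eq_norm_scalings[OF assms] by blast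
  have "{z1 * z2 | z1 z2. z1 \<in> S \<and> z2 \<in> T} =
      (\<lambda>w. c * w) ` {r *\<^sub>R z | r z. r \<in> norm ` T \<and> z \<in> S}"
    using times_ray_eq_image_scalings[of S c "norm ` T"] by (simp only: c[symmetric])
  then show ?thesis
    using that by blast
qed

lemma convex_norms_of_connected: "connected T \<Longrightarrow> convex (norm ` T)"
  by (metis connected_convex_1 connected_continuous_image continuous_on_norm_id)

lemma convex_times_in_ray:
  fixes S T :: "complex set"
  assumes "convex S" "in_ray T" "connected T"
  shows "convex {z1 * z2 | z1 z2. z1 \<in> S \<and> z2 \<in> T}"
proof -
  obtain c where eq: "{z1 * z2 | z1 z2. z1 \<in> S \<and> z2 \<in> T} =
      (\<lambda>w. c * w) ` {r *\<^sub>R z | r z. r \<in> norm ` T \<and> z \<in> S}"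
    using times_in_ray_eq_image_nonneg_scalings[OF assms(2)] by blast
  have "norm ` T \<subseteq> {0..}"
    by auto
  then have "convex {r *\<^sub>R z | r z. r \<in> norm ` T \<and> z \<in> S}"
    by (rule convex_nonneg_scalings[OF assms(1) convex_norms_of_connected[OF assms(3)]])
  then show ?thesis
    unfolding eq by (rule convex_linear_image[OF linear_times])
qed

lemma starlike_times_in_ray:
  fixes S T :: "complex set"
  assumes "starlike S" "in_ray T" "connected T" "T \<noteq> {}"
  shows "starlike {z1 * z2 | z1 z2. z1 \<in> S \<and> z2 \<in> T}"
proof -
  obtain c where eq: "{z1 * z2 | z1 z2. z1 \<in> S \<and> z2 \<in> T} =
      (\<lambda>w. c * w) ` {r *\<^sub>R z | r z. r \<in> norm ` T \<and> z \<in> S}"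
    using times_in_ray_eq_image_nonneg_scalings[OF assms(2)] by blast
  have "norm ` T \<subseteq> {0..}" "norm ` T \<noteq> {}"
    using assms(4) by auto
  then have "starlike {r *\<^sub>R z | r z. r \<in> norm ` T \<and> z \<in> S}"
    by (rule starlike_nonneg_scalings[OF assms(1) convex_norms_of_connected[OF assms(3)]])
  then show ?thesis
    unfolding eq by (rule starlike_linear_image[OF linear_times])
qed

lemma set_times_commute:
  fixes S T :: "'a::ab_semigroup_mult set"
  shows "{z1 * z2 | z1 z2. z1 \<in> S \<and> z2 \<in> T} = {z1 * z2 | z1 z2. z1 \<in> T \<and> z2 \<in> S}"
  using mult.commute by blast

theorem proposition2p9:
  fixes K1 :: "(complex^'n::finite^'n) set" and K2 :: "(complex^'m::finite^'m) set"
    and A1 C1 :: "complex^'n^'n" and A2 C2 :: "complex^'m^'m"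
  assumes "compact_connected_unitary_subgroup K1"
    and "compact_connected_unitary_subgroup K2"
  defines "K \<equiv> {kron U1 U2 | U1 U2. U1 \<in> K1 \<and> U2 \<in> K2}"
  shows "rel_C_numrange K (kron C1 C2) (kron A1 A2) =
           {z1 * z2 | z1 z2. z1 \<in> rel_C_numrange K1 C1 A1 \<and> z2 \<in> rel_C_numrange K2 C2 A2}
       \<and> ((starlike (rel_C_numrange K1 C1 A1) \<and> in_ray (rel_C_numrange K2 C2 A2)) \<or>
         (starlike (rel_C_numrange K2 C2 A2) \<and> in_ray (rel_C_numrange K1 C1 A1))
         \<longrightarrow> starlike (rel_C_numrange K (kron C1 C2) (kron A1 A2)))
       \<and> ((convex (rel_C_numrange K1 C1 A1) \<and> in_ray (rel_C_numrange K2 C2 A2)) \<or>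
         (convex (rel_C_numrange K2 C2 A2) \<and> in_ray (rel_C_numrange K1 C1 A1))
         \<longrightarrow> convex (rel_C_numrange K (kron C1 C2) (kron A1 A2)))"
proof -
  let ?W1 = "rel_C_numrange K1 C1 A1" and ?W2 = "rel_C_numrange K2 C2 A2"
  have W1: "connected ?W1" "?W1 \<noteq> {}" and W2: "connected ?W2" "?W2 \<noteq> {}"
    using assms(1,2) connected_rel_C_numrange rel_C_numrange_nonempty
    unfolding compact_connected_unitary_subgroup_def by blast+
  show ?thesis
    unfolding K_def rel_C_numrange_kron
    using starlike_times_in_ray[of ?W1 ?W2] starlike_times_in_ray[of ?W2 ?W1]
      convex_times_in_ray[of ?W1 ?W2] convex_times_in_ray[of ?W2 ?W1] W1 W2
    by (simp add: set_times_commute[of ?W2 ?W1])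
qed

end
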